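(* Let $\overline{\Gamma'}$ be the undirected graph with vertex set $\Z[\tfrac12]$ in which two distinct vertices $f,g$ are adjacent iff $|f-g|=2^i$ for some $i\in\Z$. For $n\ge1$ let $e(n)$ be the number of unordered pairs $\{x,y\}\subset\{1,\dots,n\}$ with $|x-y|$ a power of $2$ (equivalently $e(n)=kn-2^k+1$ where $2^{k-1}<n\leq2^k$). Then every subgraph $G$ of $\overline{\Gamma'}$ with $n$ vertices satisfies $|E(G)|\leq e(n)$. *)

theory Defs
  imports Complex_Main
begin

definition dyadic :: "rat \<Rightarrow> bool" where
  "dyadic q \<longleftrightarrow> (\<exists>a::int. \<exists>m::nat. q = of_int a / 2 ^ m)"

definition adj :: "rat \<Rightarrow> rat \<Rightarrow> bool" where
  "adj f g \<longleftrightarrow> f \<noteq> g \<and> (\<exists>i::int. \<bar>f - g\<bar> = 2 powi i)"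

definition e_num :: "nat \<Rightarrow> nat" where
  "e_num n = card {{x, y} | x y :: nat. x \<in> {1..n} \<and> y \<in> {1..n} \<and> x \<noteq> y \<and>
                      (\<exists>k::nat. (if x \<le> y then y - x else x - y) = 2 ^ k)}"

end

theory Submission
  imports Defs
begin

text \<open>Scaling by a common power of 2 turns an n-vertex subgraph of the dyadic graph into a set S
of n integers in which adjacent points differ by 2^k with k \<ge> 0. Let R(n) be the sum of the
binary lengths of 0, ..., n-1; then e(n) = R(n), because the point m + 1 of {1..n} has exactly
binary-length(m) neighbours below it. The bound |E(S)| \<le> R(|S|) is proved by induction on
|S| + \<Sum>|x|. If all points of S have the same parity, x \<mapsto> x div 2 is injective and maps edges to
edges while decreasing \<Sum>|x|. Otherwise the even part A and the odd part B are handled inductively,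
and an edge between them has length 1, so there are at most min(2|A|, 2|B|, |S| - 1) such edges;
the inequality R(a) + R(b) + min(2a, 2b, a + b - 1) \<le> R(a + b) closes the induction.\<close>

definition binary_length :: "nat \<Rightarrow> nat" where
  "binary_length m = card {k. (2::nat) ^ k \<le> m}"

definition binary_length_sum :: "nat \<Rightarrow> nat" where
  "binary_length_sum n = (\<Sum>m<n. binary_length m)"

lemma finite_powers_of_two_le: "finite {k. (2::nat) ^ k \<le> m}"
  by (rule finite_subset[of _ "{..<m}"]) (auto intro: less_le_trans[OF less_exp])

lemma binary_length_0 [simp]: "binary_length 0 = 0"
  by (simp add: binary_length_def)

lemma binary_length_div2:
  assumes "0 < m"
  shows "binary_length m = Suc (binary_length (m div 2))"
proof -
  have "{k. (2::nat) ^ k \<le> m} = insert 0 (Suc ` {k. 2 ^ k \<le> m div 2})"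
  proof (rule set_eqI)
    fix k show "k \<in> {k. (2::nat) ^ k \<le> m} \<longleftrightarrow> k \<in> insert 0 (Suc ` {k. 2 ^ k \<le> m div 2})"
      using assms by (cases k) (auto simp: less_eq_div_iff_mult_less_eq mult.commute)
  qed
  then show ?thesis
    unfolding binary_length_def using finite_powers_of_two_le by (simp add: card_image)
qed

lemma binary_length_sum_Suc: "binary_length_sum (Suc n) = binary_length_sum n + binary_length n"
  by (simp add: binary_length_sum_def)

lemma binary_length_sum_odd:
  "binary_length_sum (2 * p + 1) = binary_length_sum p + binary_length_sum (Suc p) + 2 * p"
proof (induction p)
  case 0
  then show ?case by (simp add: binary_length_sum_def)
next
  case (Suc p)
  have "binary_length_sum (2 * Suc p) = 2 * binary_length_sum (Suc p) + 2 * p + 1"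
    using Suc.IH binary_length_div2[of "2 * p + 1"] by (simp add: binary_length_sum_Suc)
  then show ?case
    using binary_length_div2[of "2 * Suc p"] by (simp add: binary_length_sum_Suc)
qed

lemma binary_length_sum_even:
  assumes "0 < p"
  shows "binary_length_sum (2 * p) + 1 = 2 * binary_length_sum p + 2 * p"
proof -
  obtain q where "p = Suc q" using assms gr0_implies_Suc by blast
  then show ?thesis
    using binary_length_sum_odd[of q] binary_length_div2[of "2 * q + 1"]
    by (simp add: binary_length_sum_Suc)
qed

definition pow2_pair :: "nat \<times> nat \<Rightarrow> nat set" where
  "pow2_pair = (\<lambda>(m, k). {Suc m - 2 ^ k, Suc m})"

lemma inj_on_pow2_pair: "inj_on pow2_pair {(m, k). 2 ^ k \<le> m}"
proof (rule inj_onI)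
  fix i j assume "i \<in> {(m, k). 2 ^ k \<le> m}" "j \<in> {(m, k). 2 ^ k \<le> m}"
    and eq: "pow2_pair i = pow2_pair j"
  then obtain m k m' k' where ij: "i = (m, k)" "j = (m', k')" and "2 ^ k \<le> m" "2 ^ k' \<le> m'"
    by auto
  then have "Suc m - 2 ^ k < Suc m" "Suc m' - 2 ^ k' < Suc m'" by simp_all
  with eq have "m = m'" "Suc m - 2 ^ k = Suc m' - 2 ^ k'"
    by (auto simp: ij pow2_pair_def doubleton_eq_iff)
  with \<open>2 ^ k \<le> m\<close> \<open>2 ^ k' \<le> m'\<close> have "(2::nat) ^ k = 2 ^ k'" by linarith
  then show "i = j" using ij \<open>m = m'\<close> by simp
qed

lemma pow2_pairs_eq_image:
  "{{x, y} | x y :: nat. x \<in> {1..n} \<and> y \<in> {1..n} \<and> x \<noteq> y \<and>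
      (\<exists>k::nat. (if x \<le> y then y - x else x - y) = 2 ^ k)} =
    pow2_pair ` (SIGMA m:{..<n}. {k. 2 ^ k \<le> m})" (is "?pairs = pow2_pair ` ?I")
proof (intro equalityI subsetI)
  fix s assume "s \<in> ?pairs"
  then obtain x y k where s: "s = {x, y}" and "x \<in> {1..n}" "y \<in> {1..n}" "x \<noteq> y"
    and k: "(if x \<le> y then y - x else x - y) = 2 ^ k" by blast
  then consider "x < y" "y - x = 2 ^ k" | "y < x" "x - y = 2 ^ k" by (auto split: if_splits)
  then show "s \<in> pow2_pair ` ?I"
  proof cases
    case 1
    then have "(y - 1, k) \<in> ?I" "s = pow2_pair (y - 1, k)"
      using s \<open>x \<in> {1..n}\<close> \<open>y \<in> {1..n}\<close> by (auto simp: pow2_pair_def)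
    then show ?thesis by blast
  next
    case 2
    then have "(x - 1, k) \<in> ?I" "s = pow2_pair (x - 1, k)"
      using s \<open>x \<in> {1..n}\<close> \<open>y \<in> {1..n}\<close> by (auto simp: pow2_pair_def)
    then show ?thesis by blast
  qed
next
  fix s assume "s \<in> pow2_pair ` ?I"
  then obtain m k where "m < n" "2 ^ k \<le> m" "s = {Suc m - 2 ^ k, Suc m}"
    by (auto simp: pow2_pair_def)
  moreover have "(0::nat) < 2 ^ k" by simp
  then have "Suc m - 2 ^ k \<noteq> Suc m" by linarith
  moreover have "Suc m - 2 ^ k \<in> {1..n}"
    "(if Suc m - 2 ^ k \<le> Suc m then Suc m - (Suc m - 2 ^ k) else Suc m - 2 ^ k - Suc m) = 2 ^ k"
    using \<open>m < n\<close> \<open>2 ^ k \<le> m\<close> by auto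
  ultimately show "s \<in> ?pairs" by fastforce
qed

lemma e_num_eq_binary_length_sum: "e_num n = binary_length_sum n"
proof -
  have "inj_on pow2_pair (SIGMA m:{..<n}. {k. 2 ^ k \<le> m})"
    by (rule inj_on_subset[OF inj_on_pow2_pair]) auto
  then show ?thesis
    unfolding e_num_def pow2_pairs_eq_image binary_length_sum_def binary_length_def
    using finite_powers_of_two_le by (simp add: card_image)
qed

definition unit_edge_bound :: "nat \<Rightarrow> nat \<Rightarrow> nat" where
  "unit_edge_bound a b = min (2 * min a b) (a + b - 1)"

lemma unit_edge_bound_halves:
  "unit_edge_bound (2 * p) (2 * q) \<le> 2 * unit_edge_bound p q + 1"
  "0 < q \<Longrightarrow>
    unit_edge_bound (2 * p + 1) (2 * q) \<le> unit_edge_bound p q + unit_edge_bound (Suc p) q + 1"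
  "0 < p \<Longrightarrow>
    unit_edge_bound (2 * p) (2 * q + 1) \<le> unit_edge_bound p q + unit_edge_bound p (Suc q) + 1"
  "unit_edge_bound (2 * p + 1) (2 * q + 1) \<le>
    unit_edge_bound p (Suc q) + unit_edge_bound (Suc p) q + 1"
  unfolding unit_edge_bound_def by (auto simp: min_def)

lemma binary_length_sum_superadditive:
  "binary_length_sum a + binary_length_sum b + unit_edge_bound a b \<le> binary_length_sum (a + b)"
proof (induction "a + b" arbitrary: a b rule: less_induct)
  case less
  note IH = less.hyps
  show ?case
  proof (cases "a = 0 \<or> b = 0")
    case True
    then show ?thesis by (auto simp: binary_length_sum_def unit_edge_bound_def)
  next
    case False
    then have "0 < a" "0 < b" by auto
    consider (even_even) p q where "a = 2 * p" "b = 2 * q"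
      | (odd_even) p q where "a = 2 * p + 1" "b = 2 * q"
      | (even_odd) p q where "a = 2 * p" "b = 2 * q + 1"
      | (odd_odd) p q where "a = 2 * p + 1" "b = 2 * q + 1"
      by (metis evenE oddE)
    then show ?thesis
    proof cases
      case even_even
      then have "0 < p" "0 < q" using \<open>0 < a\<close> \<open>0 < b\<close> by auto
      then show ?thesis
        using even_even IH[of p q] binary_length_sum_even[of p] binary_length_sum_even[of q]
          binary_length_sum_even[of "p + q"] unit_edge_bound_halves(1)[of p q]
        by simp
    next
      case odd_even
      then have "0 < q" using \<open>0 < b\<close> by auto
      then show ?thesis
        using odd_even IH[of p q] IH[of "Suc p" q] binary_length_sum_odd[of p]
          binary_length_sum_even[of q] binary_length_sum_odd[of "p + q"]
          unit_edge_bound_halves(2)[where p = p and q = q]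
        by simp
    next
      case even_odd
      then have "0 < p" using \<open>0 < a\<close> by auto
      then show ?thesis
        using even_odd IH[of p q] IH[of p "Suc q"] binary_length_sum_odd[of q]
          binary_length_sum_even[of p] binary_length_sum_odd[of "p + q"]
          unit_edge_bound_halves(3)[where p = p and q = q]
        by simp
    next
      case odd_odd
      show ?thesis
        using odd_odd IH[of p "Suc q"] IH[of "Suc p" q] binary_length_sum_odd[of p]
          binary_length_sum_odd[of q] binary_length_sum_even[of "p + q + 1"]
          unit_edge_bound_halves(4)[of p q]
        by simp
    qed
  qed
qed

definition pow2_edges :: "int set \<Rightarrow> int set set" where
  "pow2_edges S = {{x, y} | x y. x \<in> S \<and> y \<in> S \<and> (\<exists>k::nat. \<bar>x - y\<bar> = 2 ^ k)}"

definition unit_edges :: "int set \<Rightarrow> int set set" where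
  "unit_edges S = {{x, x + 1} | x. x \<in> S \<and> x + 1 \<in> S}"

lemma pow2_edgesI: "x \<in> S \<Longrightarrow> y \<in> S \<Longrightarrow> \<bar>x - y\<bar> = 2 ^ k \<Longrightarrow> {x, y} \<in> pow2_edges S"
  unfolding pow2_edges_def by blast

lemma pow2_edges_subset_Pow: "pow2_edges S \<subseteq> Pow S"
  by (auto simp: pow2_edges_def)

lemma finite_pow2_edges: "finite S \<Longrightarrow> finite (pow2_edges S)"
  using pow2_edges_subset_Pow finite_subset by blast

lemma pow2_edges_empty_if_card_le_1:
  assumes "finite S" "card S \<le> 1"
  shows "pow2_edges S = {}"
proof -
  have "\<forall>x\<in>S. \<forall>y\<in>S. x = y"
    using assms by (simp add: card_le_Suc0_iff_eq)
  then show ?thesis by (auto simp: pow2_edges_def)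
qed

lemma card_le_card_if_inj_on_members:
  assumes "inj_on h V" "\<forall>e\<in>E. e \<subseteq> V" "\<forall>e\<in>E. h ` e \<in> F" "finite F"
  shows "card E \<le> card F"
proof -
  have "inj_on (image h) E"
    using assms(1,2) by (simp add: inj_on_def inj_on_image_eq_iff)
  then show ?thesis
    using assms(3,4) by (intro card_inj_on_le) auto
qed

lemma inj_on_div2_same_parity:
  assumes "\<forall>x\<in>S. \<forall>y\<in>S. even (x - y :: int)"
  shows "inj_on (\<lambda>x. x div 2) S"
proof (rule inj_onI)
  fix x y assume "x \<in> S" "y \<in> S" "x div 2 = y div 2"
  moreover from assms \<open>x \<in> S\<close> \<open>y \<in> S\<close> have "x mod 2 = y mod 2"
    by (metis even_iff_mod_2_eq_zero mod_eq_dvd_iff)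
  ultimately show "x = y" by (metis div_mult_mod_eq)
qed

lemma card_pow2_edges_le_div2:
  assumes "finite S" and same_parity: "\<forall>x\<in>S. \<forall>y\<in>S. even (x - y)"
  shows "card (pow2_edges S) \<le> card (pow2_edges ((\<lambda>x. x div 2) ` S))"
proof (rule card_le_card_if_inj_on_members[OF inj_on_div2_same_parity[OF same_parity]])
  show "\<forall>e\<in>pow2_edges S. (\<lambda>x. x div 2) ` e \<in> pow2_edges ((\<lambda>x. x div 2) ` S)"
  proof
    fix e assume "e \<in> pow2_edges S"
    then obtain x y k where e: "e = {x, y}" and "x \<in> S" "y \<in> S" and k: "\<bar>x - y\<bar> = 2 ^ k"
      by (auto simp: pow2_edges_def)
    have "even (x - y)" using same_parity \<open>x \<in> S\<close> \<open>y \<in> S\<close> by blast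
    then have "x - y = 2 * (x div 2 - y div 2)" by presburger
    moreover have "k \<noteq> 0"
    proof
      assume "k = 0"
      with k have "\<bar>x - y\<bar> = 1" by simp
      with \<open>even (x - y)\<close> show False by presburger
    qed
    then obtain j where "k = Suc j" using not0_implies_Suc by blast
    ultimately have "\<bar>x div 2 - y div 2\<bar> = 2 ^ j"
      using k by (simp add: abs_mult)
    then show "(\<lambda>x. x div 2) ` e \<in> pow2_edges ((\<lambda>x. x div 2) ` S)"
      unfolding e using \<open>x \<in> S\<close> \<open>y \<in> S\<close> by (simp add: pow2_edgesI)
  qed
next
  show "\<forall>e\<in>pow2_edges S. e \<subseteq> S" using pow2_edges_subset_Pow by blast
  show "finite (pow2_edges ((\<lambda>x. x div 2) ` S))" using assms(1) by (simp add: finite_pow2_edges)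
qed

lemma pow2_edges_parity_split:
  "pow2_edges S \<subseteq> pow2_edges {x\<in>S. even x} \<union> pow2_edges {x\<in>S. odd x} \<union> unit_edges S"
proof
  fix e assume "e \<in> pow2_edges S"
  then obtain x y k where e: "e = {x, y}" and "x \<in> S" "y \<in> S" and k: "\<bar>x - y\<bar> = 2 ^ k"
    by (auto simp: pow2_edges_def)
  show "e \<in> pow2_edges {x\<in>S. even x} \<union> pow2_edges {x\<in>S. odd x} \<union> unit_edges S"
  proof (cases "even x = even y")
    case True
    then show ?thesis using e \<open>x \<in> S\<close> \<open>y \<in> S\<close> k by (auto simp: pow2_edges_def)
  next
    case False
    then have "odd \<bar>x - y\<bar>" by simp
    then have "\<bar>x - y\<bar> = 1" using k by (cases k) auto
    then have "y = x + 1 \<or> x = y + 1" by auto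
    then show ?thesis using e \<open>x \<in> S\<close> \<open>y \<in> S\<close> by (auto simp: unit_edges_def insert_commute)
  qed
qed

lemma unit_edges_eq_image: "unit_edges S = (\<lambda>x. {x, x + 1}) ` {x\<in>S. x + 1 \<in> S}"
  by (auto simp: unit_edges_def)

lemma finite_unit_edges: "finite S \<Longrightarrow> finite (unit_edges S)"
  by (simp add: unit_edges_eq_image)

lemma card_unit_edges_le_card_minus_1:
  assumes "finite S"
  shows "card (unit_edges S) \<le> card S - 1"
proof (cases "S = {}")
  case True
  then show ?thesis by (simp add: unit_edges_def)
next
  case False
  have "card (unit_edges S) \<le> card {x\<in>S. x + 1 \<in> S}"
    using assms by (simp add: unit_edges_eq_image card_image_le)
  also have "\<dots> \<le> card (S - {Max S})"
  proof (rule card_mono)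
    show "{x\<in>S. x + 1 \<in> S} \<subseteq> S - {Max S}"
    proof
      fix x assume "x \<in> {x\<in>S. x + 1 \<in> S}"
      then have "x \<in> S" "x + 1 \<le> Max S" using assms by auto
      then show "x \<in> S - {Max S}" by auto
    qed
  qed (use assms in simp)
  also have "\<dots> = card S - 1" using assms False by simp
  finally show ?thesis .
qed

lemma card_unit_edges_le_twice:
  assumes "finite A" and covers: "\<forall>x\<in>S. x + 1 \<in> S \<longrightarrow> x \<in> A \<or> x + 1 \<in> A"
  shows "card (unit_edges S) \<le> 2 * card A"
proof -
  have "unit_edges S \<subseteq> (\<lambda>x. {x, x + 1}) ` A \<union> (\<lambda>x. {x - 1, x}) ` A"
  proof
    fix e assume "e \<in> unit_edges S"
    then obtain x where e: "e = {x, x + 1}" and "x \<in> S" "x + 1 \<in> S"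
      by (auto simp: unit_edges_def)
    with covers have "x \<in> A \<or> x + 1 \<in> A" by blast
    moreover have "e = (\<lambda>x. {x - 1, x}) (x + 1)" using e by simp
    ultimately show "e \<in> (\<lambda>x. {x, x + 1}) ` A \<union> (\<lambda>x. {x - 1, x}) ` A"
      using e by blast
  qed
  then have "card (unit_edges S) \<le> card ((\<lambda>x. {x, x + 1}) ` A \<union> (\<lambda>x. {x - 1, x}) ` A)"
    using assms(1) by (intro card_mono) simp_all
  also have "\<dots> \<le> card ((\<lambda>x. {x, x + 1}) ` A) + card ((\<lambda>x. {x - 1, x}) ` A)"
    by (rule card_Un_le)
  also have "\<dots> \<le> card A + card A"
    using assms(1) by (intro add_mono card_image_le)
  finally show ?thesis by simp
qed

lemma card_parity_split:
  "finite S \<Longrightarrow> card S = card {x\<in>S. even (x::int)} + card {x\<in>S. odd x}"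
  by (subst card_Un_disjoint[symmetric]) (auto intro: arg_cong[where f = card])

lemma card_pow2_edges_le_parity_split:
  assumes "finite S"
  defines "A \<equiv> {x\<in>S. even x}" and "B \<equiv> {x\<in>S. odd x}"
  shows "card (pow2_edges S) \<le>
    card (pow2_edges A) + card (pow2_edges B) + unit_edge_bound (card A) (card B)"
proof -
  have "finite A" "finite B" using assms(1) by (simp_all add: A_def B_def)
  have "card S = card A + card B"
    unfolding A_def B_def using assms(1) by (rule card_parity_split)
  moreover have "card (unit_edges S) \<le> card S - 1"
    using assms(1) by (rule card_unit_edges_le_card_minus_1)
  moreover have "card (unit_edges S) \<le> 2 * card A"
    using \<open>finite A\<close> by (rule card_unit_edges_le_twice) (simp add: A_def)
  moreover have "card (unit_edges S) \<le> 2 * card B"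
    using \<open>finite B\<close> by (rule card_unit_edges_le_twice) (simp add: B_def)
  ultimately have "card (unit_edges S) \<le> unit_edge_bound (card A) (card B)"
    by (simp add: unit_edge_bound_def)
  moreover have
    "card (pow2_edges S) \<le> card (pow2_edges A) + card (pow2_edges B) + card (unit_edges S)"
  proof -
    have "pow2_edges S \<subseteq> pow2_edges A \<union> pow2_edges B \<union> unit_edges S"
      unfolding A_def B_def by (rule pow2_edges_parity_split)
    then have "card (pow2_edges S) \<le> card (pow2_edges A \<union> pow2_edges B \<union> unit_edges S)"
      using \<open>finite A\<close> \<open>finite B\<close> assms(1)
      by (intro card_mono) (simp_all add: finite_pow2_edges finite_unit_edges)
    also have "\<dots> \<le> card (pow2_edges A) + card (pow2_edges B) + card (unit_edges S)"
      by (meson add_mono card_Un_le le_trans order_refl)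
    finally show ?thesis .
  qed
  ultimately show ?thesis by linarith
qed

lemma abs_div2_le: "\<bar>(x::int) div 2\<bar> \<le> \<bar>x\<bar>"
  by (simp add: abs_if) presburger

lemma abs_div2_less: "(x::int) \<notin> {0, -1} \<Longrightarrow> \<bar>x div 2\<bar> < \<bar>x\<bar>"
  by (simp add: abs_if) presburger

lemma sum_nat_abs_div2_less:
  fixes S :: "int set"
  assumes "finite S" "2 \<le> card S" and same_parity: "\<forall>x\<in>S. \<forall>y\<in>S. even (x - y)"
  shows "(\<Sum>x\<in>(\<lambda>x. x div 2) ` S. nat \<bar>x\<bar>) < (\<Sum>x\<in>S. nat \<bar>x\<bar>)"
proof -
  obtain x y where "x \<in> S" "y \<in> S" "x \<noteq> y"
    using assms(1,2) card_le_Suc0_iff_eq[of S] by auto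
  moreover have "even (x - y)" using same_parity \<open>x \<in> S\<close> \<open>y \<in> S\<close> by blast
  ultimately have "x \<notin> {0, -1} \<or> y \<notin> {0, -1}" by auto
  then obtain z where "z \<in> S" "z \<notin> {0, -1}" using \<open>x \<in> S\<close> \<open>y \<in> S\<close> by blast
  have "(\<Sum>x\<in>(\<lambda>x. x div 2) ` S. nat \<bar>x\<bar>) = (\<Sum>x\<in>S. nat \<bar>x div 2\<bar>)"
    using inj_on_div2_same_parity[OF same_parity] by (simp add: sum.reindex)
  also have "\<dots> < (\<Sum>x\<in>S. nat \<bar>x\<bar>)"
  proof (rule sum_strict_mono_ex1[OF assms(1)])
    show "\<forall>x\<in>S. nat \<bar>x div 2\<bar> \<le> nat \<bar>x\<bar>" using abs_div2_le by (simp add: nat_mono)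
    show "\<exists>x\<in>S. nat \<bar>x div 2\<bar> < nat \<bar>x\<bar>"
      using \<open>z \<in> S\<close> \<open>z \<notin> {0, -1}\<close> abs_div2_less[OF \<open>z \<notin> {0, -1}\<close>] by auto
  qed
  finally show ?thesis .
qed

theorem card_pow2_edges_le:
  "finite S \<Longrightarrow> card (pow2_edges S) \<le> binary_length_sum (card S)"
proof (induction "card S + (\<Sum>x\<in>S. nat \<bar>x\<bar>)" arbitrary: S rule: less_induct)
  case less
  consider (trivial) "card S \<le> 1"
    | (same_parity) "2 \<le> card S" "\<forall>x\<in>S. \<forall>y\<in>S. even (x - y)"
    | (mixed_parity) x y where "x \<in> S" "y \<in> S" "odd (x - y)"
    by (cases "card S \<le> 1") (auto simp: not_le)
  then show ?case
  proof cases
    case trivial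
    then show ?thesis using less.prems by (simp add: pow2_edges_empty_if_card_le_1)
  next
    case same_parity
    let ?T = "(\<lambda>x. x div 2) ` S"
    have "card ?T = card S"
      using inj_on_div2_same_parity[OF same_parity(2)] by (rule card_image)
    moreover have "card (pow2_edges ?T) \<le> binary_length_sum (card ?T)"
      using less.hyps[of ?T] less.prems sum_nat_abs_div2_less[OF less.prems same_parity]
        \<open>card ?T = card S\<close>
      by simp
    ultimately show ?thesis
      using card_pow2_edges_le_div2[OF less.prems same_parity(2)] by simp
  next
    case mixed_parity
    define A where "A = {x\<in>S. even x}"
    define B where "B = {x\<in>S. odd x}"
    have "finite A" "finite B" using less.prems by (simp_all add: A_def B_def)
    have card_S: "card S = card A + card B"
      unfolding A_def B_def using less.prems by (rule card_parity_split)
    have "A \<noteq> {}" "B \<noteq> {}"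
      using mixed_parity by (auto simp: A_def B_def)
    then have "card A < card S" "card B < card S"
      using card_S \<open>finite A\<close> \<open>finite B\<close> by auto
    moreover have "(\<Sum>x\<in>A. nat \<bar>x\<bar>) \<le> (\<Sum>x\<in>S. nat \<bar>x\<bar>)"
      "(\<Sum>x\<in>B. nat \<bar>x\<bar>) \<le> (\<Sum>x\<in>S. nat \<bar>x\<bar>)"
      using less.prems by (auto simp: A_def B_def intro: sum_mono2)
    ultimately have "card (pow2_edges A) \<le> binary_length_sum (card A)"
      "card (pow2_edges B) \<le> binary_length_sum (card B)"
      using less.hyps[of A] less.hyps[of B] \<open>finite A\<close> \<open>finite B\<close> by simp_all
    then show ?thesis
      unfolding card_S
      using card_pow2_edges_le_parity_split[OF less.prems, folded A_def B_def]
        binary_length_sum_superadditive[of "card A" "card B"]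
      by linarith
  qed
qed

lemma power_int_two_eq_of_int:
  assumes "(2::'a::linordered_field) powi j = of_int d"
  shows "d = 2 ^ nat j"
proof (cases "0 \<le> j")
  case True
  then have "(of_int d :: 'a) = of_int (2 ^ nat j)"
    using assms by (simp add: power_int_def)
  then show ?thesis by (simp only: of_int_eq_iff)
next
  case False
  then have "(of_int (d * 2 ^ nat (- j)) :: 'a) = 1"
    using assms by (simp add: power_int_def power_inverse field_simps)
  then have "d * 2 ^ nat (- j) = 1" by (simp only: of_int_eq_1_iff)
  moreover have "even (d * 2 ^ nat (- j))" using False by simp
  ultimately show ?thesis by simp
qed

lemma mult_power_in_Ints_mono:
  assumes "q * 2 ^ m \<in> \<int>" "m \<le> M"
  shows "(q :: 'a :: comm_ring_1) * 2 ^ M \<in> \<int>"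
proof -
  have "q * 2 ^ M = q * 2 ^ m * 2 ^ (M - m)"
    using assms(2) by (simp add: mult.assoc flip: power_add)
  then show ?thesis using assms(1) by simp
qed

lemma dyadic_common_denominator:
  assumes "finite V" "\<forall>v\<in>V. dyadic v"
  shows "\<exists>M. \<forall>v\<in>V. v * 2 ^ M \<in> \<int>"
  using assms
proof (induction V rule: finite_induct)
  case empty
  then show ?case by simp
next
  case (insert w V)
  then obtain M where M: "\<forall>v\<in>V. v * 2 ^ M \<in> \<int>" by auto
  from insert.prems obtain a :: int and m where "w = of_int a / 2 ^ m"
    by (auto simp: dyadic_def)
  then have "w * 2 ^ m \<in> \<int>" by simp
  then have "\<forall>v\<in>insert w V. v * 2 ^ max M m \<in> \<int>"
    using M mult_power_in_Ints_mono by (metis insert_iff max.cobounded1 max.cobounded2)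
  then show ?case by blast
qed

lemma dyadic_adj_embedding:
  assumes "finite V" "\<forall>v\<in>V. dyadic v"
  obtains h :: "rat \<Rightarrow> int" where "inj_on h V"
    "\<And>f g. f \<in> V \<Longrightarrow> g \<in> V \<Longrightarrow> adj f g \<Longrightarrow> \<exists>k::nat. \<bar>h f - h g\<bar> = 2 ^ k"
proof -
  obtain M where M: "\<forall>v\<in>V. v * 2 ^ M \<in> \<int>"
    using dyadic_common_denominator[OF assms] by blast
  define h :: "rat \<Rightarrow> int" where "h v = \<lfloor>v * 2 ^ M\<rfloor>" for v
  have h: "of_int (h v) = v * 2 ^ M" if "v \<in> V" for v
    using M that by (auto simp: h_def elim: Ints_cases)
  have "inj_on h V"
    by (rule inj_onI) (metis h mult_right_cancel zero_neq_numeral power_eq_0_iff)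
  moreover have "\<exists>k::nat. \<bar>h f - h g\<bar> = 2 ^ k" if "f \<in> V" "g \<in> V" "adj f g" for f g
  proof -
    obtain i where "\<bar>f - g\<bar> = 2 powi i" using \<open>adj f g\<close> by (auto simp: adj_def)
    have "(of_int \<bar>h f - h g\<bar> :: rat) = \<bar>f - g\<bar> * 2 ^ M"
      using h[OF \<open>f \<in> V\<close>] h[OF \<open>g \<in> V\<close>] by (simp add: abs_mult flip: left_diff_distrib)
    also have "\<dots> = 2 powi (i + int M)"
      by (simp add: \<open>\<bar>f - g\<bar> = 2 powi i\<close> power_int_add)
    finally show ?thesis
      using power_int_two_eq_of_int by metis
  qed
  ultimately show ?thesis using that by blast
qed

theorem mainTheorem7:
  fixes V :: "rat set" and E :: "rat set set" and n :: nat
  assumes "n \<ge> 1"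
    and "finite V" and "card V = n"
    and "\<forall>v\<in>V. dyadic v"
    and "\<forall>edge\<in>E. \<exists>f g. edge = {f, g} \<and> f \<in> V \<and> g \<in> V \<and> adj f g"
  shows "card E \<le> e_num n"
proof -
  obtain h :: "rat \<Rightarrow> int" where h_inj: "inj_on h V"
    and h_adj: "\<And>f g. f \<in> V \<Longrightarrow> g \<in> V \<Longrightarrow> adj f g \<Longrightarrow> \<exists>k::nat. \<bar>h f - h g\<bar> = 2 ^ k"
    by (rule dyadic_adj_embedding[OF assms(2,4)]) blast
  have "h ` e \<in> pow2_edges (h ` V)" if "e \<in> E" for e
  proof -
    obtain f g where "e = {f, g}" "f \<in> V" "g \<in> V" "adj f g"
      using assms(5) \<open>e \<in> E\<close> by auto
    then show ?thesis using h_adj[of f g] by (auto intro: pow2_edgesI)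
  qed
  then have "card E \<le> card (pow2_edges (h ` V))"
    using assms(2,5) by (intro card_le_card_if_inj_on_members[OF h_inj]) (auto simp: finite_pow2_edges)
  also have "\<dots> \<le> binary_length_sum (card (h ` V))"
    using assms(2) by (simp add: card_pow2_edges_le)
  also have "\<dots> = e_num n"
    using assms(3) h_inj by (simp add: card_image e_num_eq_binary_length_sum)
  finally show ?thesis .
qed

end
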